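(* Let $a,b\geq 1$ and $m,n,p,q>1$ be integers. The graph $aH_{m,p}\circ bH_{n,q}$ is distance magic if and only if $n\equiv 0\pmod 2$ or $mnabpq\equiv 1\pmod 2$.
   Context: A graph $G$ on $v$ vertices is distance magic if there is a bijection $f:V(G)\to\{1,\ldots,v\}$ and a constant $k$ such that for every vertex $x$, $\sum_{y\in N(x)}f(y)=k$, where $N(x)$ is the set of neighbours of $x$. $H_{n,p}$ denotes the complete multipartite graph with $p$ partite sets each of size $n$; $aH$ denotes the disjoint union of $a$ copies of $H$. The lexicographic product $G\circ H$ has vertex set $V(G)\times V(H)$, with $(g,h)$ adjacent to $(g',h')$ iff either $gg'\in E(G)$, or $g=g'$ and $hh'\in E(H)$. *)

theory Defs
  imports Main
begin

text \<open>A graph is given by a finite vertex set V and an adjacency relation E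
(only adjacencies between vertices of V matter). Neighbourhood of x: vertices y in V with E x y.\<close>

definition nbhd :: "'a set \<Rightarrow> ('a \<Rightarrow> 'a \<Rightarrow> bool) \<Rightarrow> 'a \<Rightarrow> 'a set" where
  "nbhd V E x = {y \<in> V. E x y}"

definition distance_magic :: "'a set \<Rightarrow> ('a \<Rightarrow> 'a \<Rightarrow> bool) \<Rightarrow> bool" where
  "distance_magic V E \<longleftrightarrow>
     (\<exists>(f :: 'a \<Rightarrow> nat) k. bij_betw f V {1..card V} \<and>
        (\<forall>x\<in>V. (\<Sum>y\<in>nbhd V E x. f y) = k))"

text \<open>Complete multipartite graph H_{n,p}: p partite sets of size n.
  Vertex (j,i): part j < p, index i < n. Adjacent iff in different parts.\<close>
definition Hverts :: "nat \<Rightarrow> nat \<Rightarrow> (nat \<times> nat) set" where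
  "Hverts n p = {0..<p} \<times> {0..<n}"

definition Hedge :: "(nat \<times> nat) \<Rightarrow> (nat \<times> nat) \<Rightarrow> bool" where
  "Hedge u v \<longleftrightarrow> fst u \<noteq> fst v"

definition copies_verts :: "nat \<Rightarrow> 'a set \<Rightarrow> (nat \<times> 'a) set" where
  "copies_verts a V = {0..<a} \<times> V"

definition copies_edge :: "('a \<Rightarrow> 'a \<Rightarrow> bool) \<Rightarrow> (nat \<times> 'a) \<Rightarrow> (nat \<times> 'a) \<Rightarrow> bool" where
  "copies_edge E u v \<longleftrightarrow> fst u = fst v \<and> E (snd u) (snd v)"

definition lex_verts :: "'a set \<Rightarrow> 'b set \<Rightarrow> ('a \<times> 'b) set" where
  "lex_verts VG VH = VG \<times> VH"

definition lex_edge :: "('a \<Rightarrow> 'a \<Rightarrow> bool) \<Rightarrow> ('b \<Rightarrow> 'b \<Rightarrow> bool) \<Rightarrow> ('a \<times> 'b) \<Rightarrow> ('a \<times> 'b) \<Rightarrow> bool" where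
  "lex_edge EG EH u v \<longleftrightarrow> EG (fst u) (fst v) \<or> (fst u = fst v \<and> EH (snd u) (snd v))"

end

theory Submission
  imports Defs
begin

text \<open>Fixing all coordinates of a vertex ((c, j, i), d, k, l) except l gives a block of n
  pairwise non-adjacent vertices, and every neighbourhood is a union of whole blocks. Hence a
  bijective labelling is distance magic as soon as all A = apmbq block sums are equal. Conversely,
  the magic condition forces all block sums in one copy of H_{n,q} to be equal, and the resulting
  linear equations on aH_{m,p} have only constant solutions because q > 1; so all block sums are
  some \<rho>. Summing all labels gives 2\<rho> = n(N + 1) with N = An, impossible for odd n and even N.
  Equal block sums come from an A \<times> n array filled with 0, ..., An - 1 and having equal row sums;
  complementary pairs of columns t, An - 1 - t handle even n, and for odd A a three-column array
  starts the induction.\<close>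

lemma double_sum_of_labelling:
  assumes "bij_betw f V {1..card V}"
  shows "2 * sum f V = card V * (card V + 1)"
proof -
  have "sum f V = (\<Sum>i = Suc 0..card V. i)"
    using sum.reindex_bij_betw[OF assms, of id] by simp
  then show ?thesis
    using double_gauss_sum_from_Suc_0[where 'a = nat, of "card V"] by simp
qed

lemma nbhd_lex_edge:
  assumes "x \<in> VG"
  shows "nbhd (lex_verts VG VH) (lex_edge EG EH) (x, y) = nbhd VG EG x \<times> VH \<union> {x} \<times> nbhd VH EH y"
  using assms unfolding nbhd_def lex_verts_def lex_edge_def by auto

lemma sum_nbhd_lex_edge:
  assumes "finite VG" "finite VH" "x \<in> VG" "\<not> EG x x"
  shows "(\<Sum>z\<in>nbhd (lex_verts VG VH) (lex_edge EG EH) (x, y). f z) =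
         (\<Sum>g\<in>nbhd VG EG x. \<Sum>h\<in>VH. f (g, h)) + (\<Sum>h\<in>nbhd VH EH y. f (x, h))"
proof -
  have "finite (nbhd VG EG x)" "finite (nbhd VH EH y)"
    using assms by (simp_all add: nbhd_def)
  moreover have "(nbhd VG EG x \<times> VH) \<inter> ({x} \<times> nbhd VH EH y) = {}"
    using assms(4) by (auto simp: nbhd_def)
  ultimately show ?thesis
    using assms by (simp add: nbhd_lex_edge sum.union_disjoint sum.cartesian_product')
qed

lemma sum_copies_Hverts:
  "(\<Sum>y\<in>copies_verts b (Hverts n q). f y) = (\<Sum>d<b. \<Sum>k<q. \<Sum>l<n. f (d, k, l))"
  by (simp add: copies_verts_def Hverts_def sum.cartesian_product' atLeast0LessThan)

lemma sum_nbhd_copies_Hedge: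
  assumes "d < b" "k < q"
  shows "(\<Sum>y\<in>nbhd (copies_verts b (Hverts n q)) (copies_edge Hedge) (d, k, l). f y) =
         (\<Sum>k'\<in>{..<q} - {k}. \<Sum>l'<n. f (d, k', l'))"
proof -
  have "nbhd (copies_verts b (Hverts n q)) (copies_edge Hedge) (d, k, l) = {d} \<times> (({..<q} - {k}) \<times> {..<n})"
    using assms unfolding nbhd_def copies_verts_def Hverts_def copies_edge_def Hedge_def by auto
  then show ?thesis
    by (simp add: sum.cartesian_product')
qed

lemma card_nbhd_copies_Hedge:
  assumes "d < b" "k < q"
  shows "card (nbhd (copies_verts b (Hverts n q)) (copies_edge Hedge) (d, k, l)) = (q - 1) * n"
proof -
  have "card (nbhd (copies_verts b (Hverts n q)) (copies_edge Hedge) (d, k, l)) =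
        (\<Sum>y\<in>nbhd (copies_verts b (Hverts n q)) (copies_edge Hedge) (d, k, l). 1)"
    by simp
  also have "\<dots> = (\<Sum>k'\<in>{..<q} - {k}. \<Sum>l'<n. 1)"
    by (rule sum_nbhd_copies_Hedge[OF assms])
  finally show ?thesis
    using assms by simp
qed

lemma sums_omitting_one_const:
  fixes R :: "nat \<Rightarrow> nat"
  assumes "\<forall>k<q. (\<Sum>k'\<in>{..<q} - {k}. R k') = s" "k < q"
  shows "(q - 1) * R k = s"
proof -
  have total: "(\<Sum>k'<q. R k') = R k + s" if "k < q" for k
    using assms(1) that by (simp add: sum.remove)
  have "R k' = R k" if "k' \<in> {..<q} - {k}" for k'
    using total[of k] total[of k'] that assms(2) by simp
  then have "(\<Sum>k'\<in>{..<q} - {k}. R k') = (q - 1) * R k"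
    using assms(2) by simp
  then show ?thesis
    using assms by simp
qed

text \<open>Both hypotheses on \<alpha> are needed in general: 0 and -m are eigenvalues of H_{m,p}
  with non-constant eigenvectors.\<close>

lemma complete_multipartite_weighting_const:
  fixes W :: "nat \<Rightarrow> nat \<Rightarrow> 'a :: idom" and \<alpha> \<beta> \<gamma> :: 'a
  assumes "\<alpha> \<noteq> 0" "\<alpha> \<noteq> \<beta> * of_nat m"
    and eq: "\<forall>j<p. \<forall>i<m. \<alpha> * W j i + \<beta> * (\<Sum>j'\<in>{..<p} - {j}. \<Sum>i'<m. W j' i') = \<gamma>"
    and "j < p" "i < m"
  shows "(\<alpha> + \<beta> * of_nat ((p - 1) * m)) * W j i = \<gamma>"
proof -
  define G where "G j = (\<Sum>i<m. W j i)" for j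
  define T where "T = (\<Sum>j<p. G j)"
  have eq': "\<alpha> * W j i + \<beta> * (T - G j) = \<gamma>" if "j < p" "i < m" for j i
    using eq that by (simp add: T_def G_def sum_diff1)
  have row: "W j i = W j 0" if "j < p" "i < m" for j i
  proof -
    have "\<alpha> * W j i + \<beta> * (T - G j) = \<alpha> * W j 0 + \<beta> * (T - G j)"
      using eq'[OF that] eq'[OF that(1), of 0] that(2) by simp
    then show ?thesis
      using assms(1) by simp
  qed
  have G: "G j = of_nat m * W j 0" if "j < p" for j
  proof -
    have "G j = (\<Sum>i<m. W j 0)"
      unfolding G_def by (intro sum.cong refl row[OF that]) simp
    then show ?thesis
      by simp
  qed
  have col: "W j 0 = W 0 0" if "j < p" for j
  proof -
    have "(\<alpha> - \<beta> * of_nat m) * W j 0 = \<gamma> - \<beta> * T" if "j < p" for j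
      using eq'[OF that, of 0] G[OF that] \<open>i < m\<close> by (simp add: algebra_simps)
    from this[OF \<open>j < p\<close>] this[of 0] have "(\<alpha> - \<beta> * of_nat m) * W j 0 = (\<alpha> - \<beta> * of_nat m) * W 0 0"
      using \<open>j < p\<close> by simp
    then show ?thesis
      using assms(2) by simp
  qed
  have G0: "G j = of_nat m * W 0 0" if "j < p" for j
    using G[OF that] col[OF that] by simp
  have T: "T = of_nat p * (of_nat m * W 0 0)"
  proof -
    have "T = (\<Sum>j<p. of_nat m * W 0 0)"
      unfolding T_def by (intro sum.cong refl) (simp add: G0)
    then show ?thesis
      by simp
  qed
  have "(\<alpha> + \<beta> * (of_nat p - 1) * of_nat m) * W 0 0 = \<gamma>"
    using eq'[of 0 0] G[of 0] assms(4,5) unfolding T by (simp add: algebra_simps)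
  then show ?thesis
    using row[OF assms(4,5)] col[OF assms(4)] assms(4) by (simp add: of_nat_diff mult.assoc)
qed

lemma complete_multipartite_weighting_const_nat:
  fixes W :: "nat \<Rightarrow> nat \<Rightarrow> nat" and \<alpha> \<beta> \<gamma> :: nat
  assumes "0 < \<alpha>" "\<alpha> \<noteq> \<beta> * m"
    and "\<forall>j<p. \<forall>i<m. \<alpha> * W j i + \<beta> * (\<Sum>j'\<in>{..<p} - {j}. \<Sum>i'<m. W j' i') = \<gamma>"
    and "j < p" "i < m"
  shows "(\<alpha> + \<beta> * ((p - 1) * m)) * W j i = \<gamma>"
proof -
  have "\<forall>j<p. \<forall>i<m. int \<alpha> * int (W j i) + int \<beta> * (\<Sum>j'\<in>{..<p} - {j}. \<Sum>i'<m. int (W j' i')) = int \<gamma>"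
    using assms(3) by (simp flip: of_nat_add of_nat_mult of_nat_sum)
  moreover have "int \<alpha> \<noteq> int \<beta> * int m"
    using assms(2) by (simp flip: of_nat_mult)
  ultimately have "(int \<alpha> + int \<beta> * int ((p - 1) * m)) * int (W j i) = int \<gamma>"
    using complete_multipartite_weighting_const[where W = "\<lambda>j i. int (W j i)"] assms(1,4,5) by simp
  then show ?thesis
    by (simp flip: of_nat_add of_nat_mult)
qed

definition row_magic_array :: "nat \<Rightarrow> nat \<Rightarrow> (nat \<Rightarrow> nat \<Rightarrow> nat) \<Rightarrow> bool" where
  "row_magic_array A n F \<longleftrightarrow>
     bij_betw (\<lambda>(t, l). F t l) ({..<A} \<times> {..<n}) {..<A * n} \<and> (\<exists>s. \<forall>t<A. (\<Sum>l<n. F t l) = s)"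

lemma bij_betw_lessThan_if_inj_on:
  "inj_on f X \<Longrightarrow> f ` X \<subseteq> {..<N} \<Longrightarrow> card X = N \<Longrightarrow> bij_betw f X {..<N}"
  by (simp add: bij_betw_def card_subset_eq card_image)

lemma row_magic_array_extend:
  assumes "row_magic_array A n F"
  shows "row_magic_array A (n + 2)
           (\<lambda>t l. if l < n then F t l + A else if l = n then t else A * (n + 2) - 1 - t)"
    (is "row_magic_array A (n + 2) ?G")
proof -
  obtain s where bij: "bij_betw (\<lambda>(t, l). F t l) ({..<A} \<times> {..<n}) {..<A * n}"
    and s: "\<forall>t<A. (\<Sum>l<n. F t l) = s"
    using assms unfolding row_magic_array_def by blast
  have F_less: "F t l < A * n" if "t < A" "l < n" for t l
    using bij_betw_apply[OF bij, of "(t, l)"] that by simp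
  have below: "?G t l < A \<longleftrightarrow> l = n" if "t < A" "l < n + 2" for t l
    using that by auto
  have above: "A * (n + 1) \<le> ?G t l \<longleftrightarrow> l = n + 1" if "t < A" "l < n + 2" for t l
    using that F_less[of t l] by (auto simp: algebra_simps)
  have "inj_on (\<lambda>(t, l). ?G t l) ({..<A} \<times> {..<n + 2})"
  proof (rule inj_onI, clarify)
    fix t l t' l'
    assume ranges: "t < A" "l < n + 2" "t' < A" "l' < n + 2" and eq: "?G t l = ?G t' l'"
    have "l = n \<longleftrightarrow> l' = n" "l = n + 1 \<longleftrightarrow> l' = n + 1"
      using below[of t l] below[of t' l'] above[of t l] above[of t' l'] ranges eq by simp_all
    then consider "l < n" "l' < n" | "l = n" "l' = n" | "l = n + 1" "l' = n + 1"
      using ranges by linarith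
    then show "t = t' \<and> l = l'"
    proof cases
      case 1
      then show ?thesis
        using eq ranges inj_onD[OF bij_betw_imp_inj_on[OF bij], of "(t, l)" "(t', l')"] by simp
    qed (use eq ranges in auto)
  qed
  moreover have "(\<lambda>(t, l). ?G t l) ` ({..<A} \<times> {..<n + 2}) \<subseteq> {..<A * (n + 2)}"
    using F_less by (force simp: algebra_simps)
  moreover have "(\<Sum>l<n + 2. ?G t l) = s + A * n + (A * (n + 2) - 1)" if "t < A" for t
    using s that by (simp add: sum.distrib mult.commute)
  ultimately show ?thesis
    unfolding row_magic_array_def by (auto intro!: bij_betw_lessThan_if_inj_on simp: card_cartesian_product)
qed

text \<open>Row t consists of t, A + ((t + s) mod A) and 2A + (3s - t - ((t + s) mod A)), so every row
  sums to 3A + 3s; the last column is a bijection onto [2A, 3A) because A is odd.\<close>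

lemma row_magic_array_3:
  assumes "A = 2 * s + 1"
  shows "row_magic_array A 3
           (\<lambda>t l. if l = 0 then t
                  else if l = 1 then A + (if t \<le> s then t + s else t - s - 1)
                  else 2 * A + (if t \<le> s then 2 * s - 2 * t else 4 * s + 1 - 2 * t))"
    (is "row_magic_array A 3 ?G")
proof -
  have "inj_on (\<lambda>(t, l). ?G t l) ({..<A} \<times> {..<3})"
  proof (rule inj_onI, clarify)
    fix t l t' l' :: nat
    assume "t < A" "l < 3" "t' < A" "l' < 3" "?G t l = ?G t' l'"
    then show "t = t' \<and> l = l'"
      using assms by (auto split: if_splits; presburger)
  qed
  moreover have "(\<lambda>(t, l). ?G t l) ` ({..<A} \<times> {..<3}) \<subseteq> {..<A * 3}"
    using assms by (auto split: if_splits)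
  moreover have "(\<Sum>l<3. ?G t l) = 3 * A + 3 * s" if "t < A" for t
    using that assms by (auto simp: numeral_3_eq_3)
  ultimately show ?thesis
    unfolding row_magic_array_def
    by (auto intro!: bij_betw_lessThan_if_inj_on simp: card_cartesian_product)
qed

lemma row_magic_array_add_even:
  assumes "row_magic_array A n F"
  shows "\<exists>G. row_magic_array A (n + 2 * u) G"
proof (induction u)
  case 0
  then show ?case
    using assms by auto
next
  case (Suc u)
  then show ?case
    using row_magic_array_extend by (fastforce simp: algebra_simps)
qed

lemma row_magic_array_exists:
  assumes "2 \<le> n" "even n \<or> odd A"
  shows "\<exists>F. row_magic_array A n F"
proof (cases "even n")
  case True
  have "row_magic_array A 0 (\<lambda>t l. 0)"
    by (simp add: row_magic_array_def bij_betw_def)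
  then show ?thesis
    using row_magic_array_add_even True by (metis add_0 evenE)
next
  case False
  obtain s where "A = 2 * s + 1"
    using False assms(2) oddE by blast
  moreover have "n = 3 + 2 * ((n - 3) div 2)"
    using False assms(1) by presburger
  ultimately show ?thesis
    using row_magic_array_add_even[OF row_magic_array_3] by metis
qed

abbreviation lexH_verts ::
  "nat \<Rightarrow> nat \<Rightarrow> nat \<Rightarrow> nat \<Rightarrow> nat \<Rightarrow> nat \<Rightarrow> ((nat \<times> nat \<times> nat) \<times> nat \<times> nat \<times> nat) set" where
  "lexH_verts a m p b n q \<equiv> lex_verts (copies_verts a (Hverts m p)) (copies_verts b (Hverts n q))"

abbreviation lexH_edge ::
  "(nat \<times> nat \<times> nat) \<times> nat \<times> nat \<times> nat \<Rightarrow> (nat \<times> nat \<times> nat) \<times> nat \<times> nat \<times> nat \<Rightarrow> bool" where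
  "lexH_edge \<equiv> lex_edge (copies_edge Hedge) (copies_edge Hedge)"

definition block_sum ::
  "((nat \<times> nat \<times> nat) \<times> nat \<times> nat \<times> nat \<Rightarrow> nat) \<Rightarrow> nat \<Rightarrow> nat \<times> nat \<times> nat \<Rightarrow> nat \<Rightarrow> nat \<Rightarrow> nat" where
  "block_sum f n g d k = (\<Sum>l<n. f (g, d, k, l))"

lemma lexH_sum_nbhd:
  assumes "g \<in> copies_verts a (Hverts m p)" "d < b" "k < q"
  shows "(\<Sum>y\<in>nbhd (lexH_verts a m p b n q) lexH_edge (g, d, k, l). f y) =
    (\<Sum>g'\<in>nbhd (copies_verts a (Hverts m p)) (copies_edge Hedge) g. \<Sum>d'<b. \<Sum>k'<q. block_sum f n g' d' k') +
    (\<Sum>k'\<in>{..<q} - {k}. block_sum f n g d k')"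
proof -
  have "finite (copies_verts c (Hverts n' q'))" for c n' q'
    by (simp add: copies_verts_def Hverts_def)
  then show ?thesis
    using assms by (simp add: sum_nbhd_lex_edge copies_edge_def Hedge_def sum_copies_Hverts
        sum_nbhd_copies_Hedge block_sum_def)
qed

lemma lexH_verts_cases:
  assumes "x \<in> lexH_verts a m p b n q"
  obtains c j i d k l where "x = ((c, j, i), d, k, l)" "c < a" "j < p" "i < m" "d < b" "k < q" "l < n"
  using assms unfolding lex_verts_def copies_verts_def Hverts_def by auto

lemma lexH_magic_if_equal_block_sums:
  assumes "\<forall>g\<in>copies_verts a (Hverts m p). \<forall>d<b. \<forall>k<q. block_sum f n g d k = \<rho>"
    and "x \<in> lexH_verts a m p b n q"
  shows "(\<Sum>y\<in>nbhd (lexH_verts a m p b n q) lexH_edge x. f y) = (p - 1) * m * (b * q * \<rho>) + (q - 1) * \<rho>"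
proof -
  obtain c j i d k l where x: "x = ((c, j, i), d, k, l)" and ranges: "c < a" "j < p" "i < m" "d < b" "k < q"
    using assms(2) by (elim lexH_verts_cases)
  let ?V1 = "copies_verts a (Hverts m p)"
  let ?N1 = "nbhd ?V1 (copies_edge Hedge) (c, j, i)"
  have "(c, j, i) \<in> ?V1"
    using ranges by (simp add: copies_verts_def Hverts_def)
  moreover have "(\<Sum>g'\<in>?N1. \<Sum>d'<b. \<Sum>k'<q. block_sum f n g' d' k') = (\<Sum>g'\<in>?N1. b * q * \<rho>)"
    using assms(1) by (intro sum.cong refl) (auto simp: nbhd_def)
  ultimately have "(\<Sum>y\<in>nbhd (lexH_verts a m p b n q) lexH_edge x. f y) =
      (\<Sum>g'\<in>?N1. b * q * \<rho>) + (q - 1) * \<rho>"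
    using assms(1) ranges unfolding x by (simp add: lexH_sum_nbhd)
  also have "\<dots> = (p - 1) * m * (b * q * \<rho>) + (q - 1) * \<rho>"
    using card_nbhd_copies_Hedge[of c a j p m i] ranges by simp
  finally show ?thesis .
qed

lemma lexH_block_equation:
  assumes "0 < n" "g \<in> copies_verts a (Hverts m p)" "d < b" "k < q"
    and magic: "\<forall>x\<in>lexH_verts a m p b n q. (\<Sum>y\<in>nbhd (lexH_verts a m p b n q) lexH_edge x. f y) = K"
  shows "(q - 1) * block_sum f n g d k +
    (\<Sum>g'\<in>nbhd (copies_verts a (Hverts m p)) (copies_edge Hedge) g. \<Sum>d'<b. \<Sum>k'<q. block_sum f n g' d' k') = K"
    (is "_ + ?S = K")
proof -
  have others: "?S + (\<Sum>k'\<in>{..<q} - {k}. block_sum f n g d k') = K" if "k < q" for k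
  proof -
    have "(g, d, k, 0) \<in> lexH_verts a m p b n q"
      using assms(1-3) that by (simp add: lex_verts_def copies_verts_def Hverts_def)
    then show ?thesis
      using magic lexH_sum_nbhd[OF assms(2,3) that] by fastforce
  qed
  then have "\<forall>k<q. (\<Sum>k'\<in>{..<q} - {k}. block_sum f n g d k') = K - ?S"
    by (metis add_diff_cancel_left')
  then have "(q - 1) * block_sum f n g d k = K - ?S"
    using sums_omitting_one_const assms(4) by blast
  then show ?thesis
    using others[OF assms(4)] by simp
qed

lemma lexH_equal_block_sums_if_magic:
  assumes "1 < q" "0 < n" "0 < b" "0 < m"
    and magic: "\<forall>x\<in>lexH_verts a m p b n q. (\<Sum>y\<in>nbhd (lexH_verts a m p b n q) lexH_edge x. f y) = K"
  shows "\<exists>\<rho>. \<forall>g\<in>copies_verts a (Hverts m p). \<forall>d<b. \<forall>k<q. block_sum f n g d k = \<rho>"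
proof -
  let ?V1 = "copies_verts a (Hverts m p)"
  note block = lexH_block_equation[OF \<open>0 < n\<close> _ _ _ magic]
  define r where "r g = block_sum f n g 0 0" for g
  have block_r: "block_sum f n g d k = r g" if "g \<in> ?V1" "d < b" "k < q" for g d k
  proof -
    have "(q - 1) * block_sum f n g d k = (q - 1) * r g"
      using block[OF that] block[OF that(1) \<open>0 < b\<close>, of 0] \<open>1 < q\<close> unfolding r_def by linarith
    then show ?thesis
      using \<open>1 < q\<close> by simp
  qed
  have weight: "(q - 1) * r (c, j, i) + b * q * (\<Sum>j'\<in>{..<p} - {j}. \<Sum>i'<m. r (c, j', i')) = K"
    if "c < a" "j < p" "i < m" for c j i
  proof -
    have g: "(c, j, i) \<in> ?V1"
      using that by (simp add: copies_verts_def Hverts_def)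
    have "(\<Sum>g'\<in>nbhd ?V1 (copies_edge Hedge) (c, j, i). \<Sum>d'<b. \<Sum>k'<q. block_sum f n g' d' k') =
        (\<Sum>g'\<in>nbhd ?V1 (copies_edge Hedge) (c, j, i). b * q * r g')"
      by (intro sum.cong refl) (auto simp: nbhd_def block_r)
    also have "\<dots> = b * q * (\<Sum>j'\<in>{..<p} - {j}. \<Sum>i'<m. r (c, j', i'))"
      using that by (simp add: sum_nbhd_copies_Hedge sum_distrib_left)
    finally show ?thesis
      using block[OF g \<open>0 < b\<close>, of 0] \<open>1 < q\<close> unfolding r_def by simp
  qed
  define \<kappa> where "\<kappa> = q - 1 + b * q * ((p - 1) * m)"
  have "q \<le> b * q * m"
    using \<open>0 < b\<close> \<open>0 < m\<close> by simp
  then have "q - 1 \<noteq> b * q * m"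
    using \<open>1 < q\<close> by linarith
  have "\<kappa> * r (c, j, i) = K" if "c < a" "j < p" "i < m" for c j i
  proof -
    have "\<forall>j<p. \<forall>i<m. (q - 1) * r (c, j, i) + b * q * (\<Sum>j'\<in>{..<p} - {j}. \<Sum>i'<m. r (c, j', i')) = K"
      using weight[OF that(1)] by blast
    then show ?thesis
      using complete_multipartite_weighting_const_nat[OF _ \<open>q - 1 \<noteq> b * q * m\<close> _ that(2,3)] \<open>1 < q\<close>
      unfolding \<kappa>_def by simp
  qed
  then have "\<kappa> * r g = K" if "g \<in> ?V1" for g
    using that by (auto simp: copies_verts_def Hverts_def)
  moreover have "\<kappa> > 0"
    using \<open>1 < q\<close> by (simp add: \<kappa>_def)
  ultimately have "block_sum f n g d k = K div \<kappa>" if "g \<in> ?V1" "d < b" "k < q" for g d k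
    using block_r[OF that] that(1) by (metis nonzero_mult_div_cancel_left not_gr0)
  then show ?thesis
    by blast
qed

definition lexH_balanced_labelling ::
  "nat \<Rightarrow> nat \<Rightarrow> nat \<Rightarrow> nat \<Rightarrow> nat \<Rightarrow> nat \<Rightarrow> ((nat \<times> nat \<times> nat) \<times> nat \<times> nat \<times> nat \<Rightarrow> nat) \<Rightarrow> bool" where
  "lexH_balanced_labelling a m p b n q f \<longleftrightarrow>
     bij_betw f (lexH_verts a m p b n q) {1..card (lexH_verts a m p b n q)} \<and>
     (\<exists>\<rho>. \<forall>g\<in>copies_verts a (Hverts m p). \<forall>d<b. \<forall>k<q. block_sum f n g d k = \<rho>)"

lemma lexH_distance_magic_iff_balanced_labelling:
  assumes "1 < q" "0 < n" "0 < b" "0 < m"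
  shows "distance_magic (lexH_verts a m p b n q) lexH_edge \<longleftrightarrow> (\<exists>f. lexH_balanced_labelling a m p b n q f)"
  unfolding distance_magic_def lexH_balanced_labelling_def
  using lexH_equal_block_sums_if_magic[OF assms] lexH_magic_if_equal_block_sums by metis

lemma card_lexH_verts: "card (lexH_verts a m p b n q) = a * p * m * (b * q) * n"
  by (simp add: lex_verts_def copies_verts_def Hverts_def card_cartesian_product)

lemma lexH_balanced_labelling_parity:
  assumes "lexH_balanced_labelling a m p b n q f" "0 < a * p * m * (b * q)"
  shows "even n \<or> odd (card (lexH_verts a m p b n q))"
proof -
  let ?B = "a * p * m * (b * q)"
  obtain \<rho> where bij: "bij_betw f (lexH_verts a m p b n q) {1..card (lexH_verts a m p b n q)}"
    and \<rho>: "\<forall>g\<in>copies_verts a (Hverts m p). \<forall>d<b. \<forall>k<q. block_sum f n g d k = \<rho>"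
    using assms(1) unfolding lexH_balanced_labelling_def by blast
  have "sum f (lexH_verts a m p b n q) = (\<Sum>g\<in>copies_verts a (Hverts m p). \<Sum>d<b. \<Sum>k<q. block_sum f n g d k)"
    by (simp add: lex_verts_def sum.cartesian_product' sum_copies_Hverts block_sum_def)
  also have "\<dots> = (\<Sum>g\<in>copies_verts a (Hverts m p). b * q * \<rho>)"
    using \<rho> by (intro sum.cong refl) simp
  also have "\<dots> = ?B * \<rho>"
    by (simp add: copies_verts_def Hverts_def card_cartesian_product)
  finally have "2 * (?B * \<rho>) = ?B * (n * (?B * n + 1))"
    using double_sum_of_labelling[OF bij] by (simp add: card_lexH_verts algebra_simps)
  then have "2 * \<rho> = n * (?B * n + 1)"
    using assms(2) by simp
  then show ?thesis
    by (metis card_lexH_verts dvd_triv_left even_add even_mult_iff odd_one)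
qed

lemma lexH_balanced_labelling_if_row_magic_array:
  assumes "row_magic_array (a * p * m * (b * q)) n F"
  shows "\<exists>f. lexH_balanced_labelling a m p b n q f"
proof -
  let ?V = "lexH_verts a m p b n q"
  let ?B = "copies_verts a (Hverts m p) \<times> {..<b} \<times> {..<q}"
  have "finite ?B"
    by (simp add: copies_verts_def Hverts_def)
  then obtain \<beta> where \<beta>: "bij_betw \<beta> ?B {..<card ?B}"
    using ex_bij_betw_finite_nat atLeast0LessThan by metis
  have card_B: "card ?B = a * p * m * (b * q)"
    by (simp add: copies_verts_def Hverts_def card_cartesian_product)
  obtain s where F: "bij_betw (\<lambda>(t, l). F t l) ({..<card ?B} \<times> {..<n}) {..<card ?B * n}"
    and s: "\<forall>t<card ?B. (\<Sum>l<n. F t l) = s"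
    using assms unfolding row_magic_array_def card_B by blast
  define f where "f = (\<lambda>(g, d, k, l). Suc (F (\<beta> (g, d, k)) l))"
  have regroup: "bij_betw (\<lambda>(g, d, k, l). ((g, d, k), l)) ?V (?B \<times> {..<n})"
    by (rule bij_betw_byWitness[where f' = "\<lambda>((g, d, k), l). (g, d, k, l)"])
      (auto simp: lex_verts_def copies_verts_def Hverts_def)
  have shift: "bij_betw Suc {..<card ?B * n} {1..card ?B * n}"
    by (simp add: image_Suc_lessThan)
  have "bij_betw (Suc \<circ> (\<lambda>(t, l). F t l) \<circ> map_prod \<beta> id \<circ> (\<lambda>(g, d, k, l). ((g, d, k), l)))
      ?V {1..card ?B * n}"
    by (intro bij_betw_trans[OF regroup] bij_betw_trans[OF bij_betw_map_prod[OF \<beta> bij_betw_id]]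
        bij_betw_trans[OF F shift])
  then have "bij_betw f ?V {1..card ?V}"
    by (simp add: f_def comp_def case_prod_beta' card_B card_lexH_verts)
  moreover have "block_sum f n g d k = s + n" if "g \<in> copies_verts a (Hverts m p)" "d < b" "k < q" for g d k
    using s bij_betw_apply[OF \<beta>, of "(g, d, k)"] that by (simp add: block_sum_def f_def sum_Suc)
  ultimately show ?thesis
    unfolding lexH_balanced_labelling_def by blast
qed

theorem theorem13:
  fixes a b m n p q :: nat
  assumes "a \<ge> 1" "b \<ge> 1" "m > 1" "n > 1" "p > 1" "q > 1"
  shows "distance_magic
           (lex_verts (copies_verts a (Hverts m p)) (copies_verts b (Hverts n q)))
           (lex_edge (copies_edge Hedge) (copies_edge Hedge))
         \<longleftrightarrow> even n \<or> odd (m * n * a * b * p * q)"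
proof -
  have "distance_magic (lexH_verts a m p b n q) lexH_edge \<longleftrightarrow> (\<exists>f. lexH_balanced_labelling a m p b n q f)"
    using assms by (intro lexH_distance_magic_iff_balanced_labelling) auto
  also have "\<dots> \<longleftrightarrow> even n \<or> odd (card (lexH_verts a m p b n q))"
  proof
    assume "\<exists>f. lexH_balanced_labelling a m p b n q f"
    then show "even n \<or> odd (card (lexH_verts a m p b n q))"
      using lexH_balanced_labelling_parity assms by fastforce
  next
    assume "even n \<or> odd (card (lexH_verts a m p b n q))"
    then have "even n \<or> odd (a * p * m * (b * q))"
      by (auto simp: card_lexH_verts)
    then show "\<exists>f. lexH_balanced_labelling a m p b n q f"
      using row_magic_array_exists assms(4) lexH_balanced_labelling_if_row_magic_array by fastforce
  qed
  also have "card (lexH_verts a m p b n q) = m * n * a * b * p * q"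
    by (simp add: card_lexH_verts)
  finally show ?thesis .
qed

end
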